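(* Let $A$ be a semiprime associative algebra and $Q$ a subalgebra of $Q^l_{\max}(A)$ containing $A$. Then (identifying $A^{(-)}/Z(A)$ with its image in $Q^{(-)}/Z(Q)$, using $Z(A)=Z(Q)\cap A$) the extensions of Lie algebras $A^{(-)}/Z(A)\subseteq Q^{(-)}/Z(Q)$ and $[A^{(-)},A^{(-)}]/Z([A^{(-)},A^{(-)}])\subseteq [Q^{(-)},Q^{(-)}]/Z([Q^{(-)},Q^{(-)}])$ are dense.
   Context: Algebras over a commutative unital ring $\Phi$. $Q^l_{\max}(A)$ is the maximal left quotient algebra of $A$. $A^{(-)}$ is the Lie algebra on $A$ with $[x,y]=xy-yx$; $[A^{(-)},A^{(-)}]$ is the span of all $[x,y]$; $Z(\cdot)$ denotes the center. For a Lie algebra $L$, $M(L)$ is the subalgebra of $\mathrm{End}_\Phi(L)$ generated by the identity and all $\mathrm{ad}_x$, $\mathrm{ad}_x(y)=[x,y]$. An extension $L\subseteq Q$ is dense if the only $\mu\in M(Q)$ with $\mu(L)=0$ is $\mu=0$. *)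

theory Defs
  imports Main "HOL.Modules"
begin

text \<open>Associative (not necessarily unital) algebras over a commutative unital ring
  of scalars 'k are modelled as subsets of an ambient Phi-algebra 'a, where the
  ambient ring structure is the type class ring and the scalar action is sc.\<close>

definition phi_algebra :: "('k::comm_ring_1 \<Rightarrow> 'a::ring \<Rightarrow> 'a) \<Rightarrow> bool" where
  "phi_algebra sc \<longleftrightarrow> module sc \<and>
     (\<forall>c x y. sc c (x * y) = sc c x * y \<and> sc c (x * y) = x * sc c y)"

definition submod :: "('k::comm_ring_1 \<Rightarrow> 'a::ring \<Rightarrow> 'a) \<Rightarrow> 'a set \<Rightarrow> bool" where
  "submod sc S \<longleftrightarrow> 0 \<in> S \<and> (\<forall>x\<in>S. \<forall>y\<in>S. x + y \<in> S) \<and> (\<forall>x\<in>S. - x \<in> S)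
     \<and> (\<forall>c. \<forall>x\<in>S. sc c x \<in> S)"

definition subalgebra :: "('k::comm_ring_1 \<Rightarrow> 'a::ring \<Rightarrow> 'a) \<Rightarrow> 'a set \<Rightarrow> bool" where
  "subalgebra sc S \<longleftrightarrow> submod sc S \<and> (\<forall>x\<in>S. \<forall>y\<in>S. x * y \<in> S)"

definition alg_ideal :: "('k::comm_ring_1 \<Rightarrow> 'a::ring \<Rightarrow> 'a) \<Rightarrow> 'a set \<Rightarrow> 'a set \<Rightarrow> bool" where
  "alg_ideal sc A I \<longleftrightarrow> I \<subseteq> A \<and> submod sc I \<and> (\<forall>a\<in>A. \<forall>x\<in>I. a * x \<in> I \<and> x * a \<in> I)"

definition left_ideal :: "('k::comm_ring_1 \<Rightarrow> 'a::ring \<Rightarrow> 'a) \<Rightarrow> 'a set \<Rightarrow> 'a set \<Rightarrow> bool" where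
  "left_ideal sc A I \<longleftrightarrow> I \<subseteq> A \<and> submod sc I \<and> (\<forall>a\<in>A. \<forall>x\<in>I. a * x \<in> I)"

definition semiprime :: "('k::comm_ring_1 \<Rightarrow> 'a::ring \<Rightarrow> 'a) \<Rightarrow> 'a set \<Rightarrow> bool" where
  "semiprime sc A \<longleftrightarrow>
     (\<forall>I. alg_ideal sc A I \<and> (\<forall>x\<in>I. \<forall>y\<in>I. x * y = 0) \<longrightarrow> I = {0})"

definition dense_left_ideal :: "('k::comm_ring_1 \<Rightarrow> 'a::ring \<Rightarrow> 'a) \<Rightarrow> 'a set \<Rightarrow> 'a set \<Rightarrow> bool" where
  "dense_left_ideal sc A I \<longleftrightarrow> left_ideal sc A I \<and>
     (\<forall>p\<in>A. \<forall>q\<in>A. p \<noteq> 0 \<longrightarrow> (\<exists>a\<in>A. a * p \<noteq> 0 \<and> a * q \<in> I))"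

text \<open>Qm is (a copy of) the maximal left quotient algebra of the semiprime algebra A,
  via Utumi's characterization.\<close>
definition is_Qlmax :: "('k::comm_ring_1 \<Rightarrow> 'a::ring \<Rightarrow> 'a) \<Rightarrow> 'a set \<Rightarrow> 'a set \<Rightarrow> bool" where
  "is_Qlmax sc A Qm \<longleftrightarrow> subalgebra sc Qm \<and> A \<subseteq> Qm \<and>
     (\<forall>q\<in>Qm. \<exists>I. dense_left_ideal sc A I \<and> (\<forall>x\<in>I. x * q \<in> A)) \<and>
     (\<forall>q\<in>Qm. \<forall>I. dense_left_ideal sc A I \<and> (\<forall>x\<in>I. x * q = 0) \<longrightarrow> q = 0) \<and>
     (\<forall>I f. dense_left_ideal sc A I \<and> (\<forall>x\<in>I. f x \<in> A)
        \<and> (\<forall>x\<in>I. \<forall>y\<in>I. f (x + y) = f x + f y)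
        \<and> (\<forall>c. \<forall>x\<in>I. f (sc c x) = sc c (f x))
        \<and> (\<forall>a\<in>A. \<forall>x\<in>I. f (a * x) = a * f x)
        \<longrightarrow> (\<exists>q\<in>Qm. \<forall>x\<in>I. f x = x * q))"

definition lie_br :: "'a::ring \<Rightarrow> 'a \<Rightarrow> 'a" where
  "lie_br x y = x * y - y * x"

text \<open>Center of a subset w.r.t. the commutator bracket (for an associative algebra this is
  its associative center Z(A), for a Lie subalgebra L of Q^(-) it is Z(L)).\<close>
definition lie_center :: "'a::ring set \<Rightarrow> 'a set" where
  "lie_center L = {z \<in> L. \<forall>x\<in>L. lie_br z x = 0}"

definition comm_span :: "('k::comm_ring_1 \<Rightarrow> 'a::ring \<Rightarrow> 'a) \<Rightarrow> 'a set \<Rightarrow> 'a set" where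
  "comm_span sc S = module.span sc {lie_br x y | x y. x \<in> S \<and> y \<in> S}"

inductive_set mult_alg :: "('k::comm_ring_1 \<Rightarrow> 'a::ring \<Rightarrow> 'a) \<Rightarrow> 'a set \<Rightarrow> ('a \<Rightarrow> 'a) set"
  for sc :: "'k::comm_ring_1 \<Rightarrow> 'a::ring \<Rightarrow> 'a" and L :: "'a set" where
  mult_id: "id \<in> mult_alg sc L"
| mult_ad: "x \<in> L \<Longrightarrow> lie_br x \<in> mult_alg sc L"
| mult_comp: "f \<in> mult_alg sc L \<Longrightarrow> g \<in> mult_alg sc L \<Longrightarrow> f \<circ> g \<in> mult_alg sc L"
| mult_add: "f \<in> mult_alg sc L \<Longrightarrow> g \<in> mult_alg sc L \<Longrightarrow> (\<lambda>y. f y + g y) \<in> mult_alg sc L"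
| mult_scale: "f \<in> mult_alg sc L \<Longrightarrow> (\<lambda>y. sc c (f y)) \<in> mult_alg sc L"

text \<open>Density of the Lie extension L1/Z(L1) \<subseteq> L2/Z(L2) (L1 \<subseteq> L2, L1/Z(L1) identified with
  its image (L1 + Z(L2))/Z(L2)).  Every element of M(L2/Z(L2)) is induced by some mu in M(L2)
  (ad of a coset is induced by ad of a representative), and the induced operator vanishes on
  a set of cosets iff mu maps the representatives into Z(L2).\<close>
definition dense_mod_center :: "('k::comm_ring_1 \<Rightarrow> 'a::ring \<Rightarrow> 'a) \<Rightarrow> 'a set \<Rightarrow> 'a set \<Rightarrow> bool" where
  "dense_mod_center sc L1 L2 \<longleftrightarrow>
     (\<forall>\<mu>\<in>mult_alg sc L2. (\<forall>y\<in>L1. \<mu> y \<in> lie_center L2) \<longrightarrow> (\<forall>y\<in>L2. \<mu> y \<in> lie_center L2))"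

end

theory Submission
  imports Defs
begin

text \<open>Every operator in the multiplication algebra of a Lie subalgebra of Qmax is an
  elementary operator y \<mapsto> \<Sum> u y v with coefficients in the unitization of Qmax.
  The heart of the proof is that such an operator vanishing on A vanishes on Qmax.
  Multiplying by a common denominator reduces this to left coefficients a_i in A; by
  induction on the number of terms, the value w at q satisfies a_i E w = 0 for a dense
  left ideal E, hence w A a_i = 0, hence w A w = 0 and w = 0 by semiprimeness.
  Density modulo the centres follows by applying this to ad x \<circ> \<mu>; for the derived
  algebras one first composes with ad b (b \<in> A) and then with ad q (q \<in> Qmax).\<close>

lemma
  assumes "subalgebra sc S"
  shows subalgebra_zero: "0 \<in> S"
    and subalgebra_add: "x \<in> S \<Longrightarrow> y \<in> S \<Longrightarrow> x + y \<in> S"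
    and subalgebra_uminus: "x \<in> S \<Longrightarrow> - x \<in> S"
    and subalgebra_diff: "x \<in> S \<Longrightarrow> y \<in> S \<Longrightarrow> x - y \<in> S"
    and subalgebra_scale: "x \<in> S \<Longrightarrow> sc c x \<in> S"
    and subalgebra_mult: "x \<in> S \<Longrightarrow> y \<in> S \<Longrightarrow> x * y \<in> S"
  using assms unfolding subalgebra_def submod_def
  by (simp_all, metis diff_conv_add_uminus)

lemma subalgebra_lie_br: "subalgebra sc S \<Longrightarrow> x \<in> S \<Longrightarrow> y \<in> S \<Longrightarrow> lie_br x y \<in> S"
  unfolding lie_br_def by (intro subalgebra_diff subalgebra_mult)

lemma lie_br_anticomm: "lie_br x y = - lie_br y x"
  by (simp add: lie_br_def)

section \<open>Elementary operators\<close>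

text \<open>A pair (a, k) stands for a + k 1 in the unitization of the ambient algebra.\<close>

definition umult :: "('k::comm_ring_1 \<Rightarrow> 'a::ring \<Rightarrow> 'a) \<Rightarrow> 'a \<times> 'k \<Rightarrow> 'a \<times> 'k \<Rightarrow> 'a \<times> 'k" where
  "umult sc u v = (fst u * fst v + sc (snd v) (fst u) + sc (snd u) (fst v), snd u * snd v)"

definition umult_left :: "('k::comm_ring_1 \<Rightarrow> 'a::ring \<Rightarrow> 'a) \<Rightarrow> 'a \<times> 'k \<Rightarrow> 'a \<Rightarrow> 'a" where
  "umult_left sc u y = fst u * y + sc (snd u) y"

definition umult_right :: "('k::comm_ring_1 \<Rightarrow> 'a::ring \<Rightarrow> 'a) \<Rightarrow> 'a \<Rightarrow> 'a \<times> 'k \<Rightarrow> 'a" where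
  "umult_right sc y v = y * fst v + sc (snd v) y"

definition elem_op ::
    "('k::comm_ring_1 \<Rightarrow> 'a::ring \<Rightarrow> 'a) \<Rightarrow> (('a \<times> 'k) \<times> ('a \<times> 'k)) list \<Rightarrow> 'a \<Rightarrow> 'a" where
  "elem_op sc ts y = (\<Sum>p\<leftarrow>ts. umult_left sc (fst p) (umult_right sc y (snd p)))"

definition coeffs_in :: "'a set \<Rightarrow> (('a \<times> 'k) \<times> ('a \<times> 'k)) list \<Rightarrow> bool" where
  "coeffs_in R ts \<longleftrightarrow> (\<forall>p\<in>set ts. fst (fst p) \<in> R \<and> fst (snd p) \<in> R)"

definition elementary_op :: "('k::comm_ring_1 \<Rightarrow> 'a::ring \<Rightarrow> 'a) \<Rightarrow> 'a set \<Rightarrow> ('a \<Rightarrow> 'a) \<Rightarrow> bool" where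
  "elementary_op sc R f \<longleftrightarrow> (\<exists>ts. coeffs_in R ts \<and> f = elem_op sc ts)"

lemma elem_op_Nil [simp]: "elem_op sc [] y = 0"
  and elem_op_Cons [simp]:
    "elem_op sc (p # ts) y = umult_left sc (fst p) (umult_right sc y (snd p)) + elem_op sc ts y"
  by (simp_all add: elem_op_def)

lemma elem_op_append: "elem_op sc (ts @ ts') y = elem_op sc ts y + elem_op sc ts' y"
  by (induction ts) (simp_all add: add.assoc)

lemma coeffs_in_append [simp]: "coeffs_in R (ts @ ts') \<longleftrightarrow> coeffs_in R ts \<and> coeffs_in R ts'"
  by (auto simp: coeffs_in_def)

definition elem_op_alg ::
    "('k::comm_ring_1 \<Rightarrow> 'a::ring \<Rightarrow> 'a) \<Rightarrow> ('a \<times> ('a \<times> 'k)) list \<Rightarrow> 'a \<Rightarrow> 'a" where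
  "elem_op_alg sc ts y = (\<Sum>p\<leftarrow>ts. fst p * umult_right sc y (snd p))"

lemma elem_op_alg_Nil [simp]: "elem_op_alg sc [] y = 0"
  and elem_op_alg_Cons [simp]:
    "elem_op_alg sc (p # ts) y = fst p * umult_right sc y (snd p) + elem_op_alg sc ts y"
  by (simp_all add: elem_op_alg_def)

lemma elem_op_alg_left_zero: "\<forall>p\<in>set ts. z * fst p = 0 \<Longrightarrow> z * elem_op_alg sc ts y = 0"
  by (induction ts) (simp_all add: distrib_left flip: mult.assoc)

locale assoc_algebra =
  fixes sc :: "'k::comm_ring_1 \<Rightarrow> 'a::ring \<Rightarrow> 'a"
  assumes phi_algebra: "phi_algebra sc"
begin

sublocale module sc
  using phi_algebra unfolding phi_algebra_def by (elim conjE)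

lemma scale_mult_left: "sc c (x * y) = sc c x * y"
  and scale_mult_right: "sc c (x * y) = x * sc c y"
  using phi_algebra unfolding phi_algebra_def by blast+

lemma subspace_if_subalgebra: "subalgebra sc S \<Longrightarrow> subspace S"
  unfolding subspace_def by (simp add: subalgebra_zero subalgebra_add subalgebra_scale)

lemma umult_in: "subalgebra sc R \<Longrightarrow> fst u \<in> R \<Longrightarrow> fst v \<in> R \<Longrightarrow> fst (umult sc u v) \<in> R"
  unfolding umult_def by (simp add: subalgebra_add subalgebra_scale subalgebra_mult)

lemma elem_op_in:
  assumes "subalgebra sc R" and "coeffs_in R ts" and "y \<in> R"
  shows "elem_op sc ts y \<in> R"
  using assms(2)
  by (induction ts)
    (auto simp: coeffs_in_def umult_left_def umult_right_def assms(3)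
      intro!: subalgebra_zero[OF assms(1)] subalgebra_add[OF assms(1)]
      subalgebra_mult[OF assms(1)] subalgebra_scale[OF assms(1)])

lemma umult_left_umult_left:
  "umult_left sc u (umult_left sc u' y) = umult_left sc (umult sc u u') y"
proof -
  have "fst u * sc (snd u') y = sc (snd u') (fst u) * y"
    by (simp only: scale_mult_left[symmetric] scale_mult_right[symmetric])
  moreover have "sc (snd u) (fst u' * y) = sc (snd u) (fst u') * y"
    by (simp add: scale_mult_left)
  ultimately show ?thesis
    by (simp add: umult_left_def umult_def distrib_left distrib_right scale_right_distrib
        mult.assoc add.assoc)
qed

lemma umult_right_umult_right:
  "umult_right sc (umult_right sc y v') v = umult_right sc y (umult sc v' v)"
proof -
  have "y * sc (snd v) (fst v') = sc (snd v) (y * fst v')"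
    by (simp add: scale_mult_right)
  moreover have "y * sc (snd v') (fst v) = sc (snd v') y * fst v"
    by (metis scale_mult_left scale_mult_right)
  ultimately show ?thesis
    by (simp add: umult_right_def umult_def distrib_left distrib_right scale_right_distrib
        mult.assoc mult.commute add_ac)
qed

lemma umult_left_right_commute:
  "umult_left sc u (umult_right sc y v) = umult_right sc (umult_left sc u y) v"
proof -
  have "fst u * sc (snd v) y = sc (snd v) (fst u * y)"
    by (simp add: scale_mult_right)
  moreover have "sc (snd u) (y * fst v) = sc (snd u) y * fst v"
    by (simp add: scale_mult_left)
  ultimately show ?thesis
    by (simp add: umult_right_def umult_left_def distrib_left distrib_right scale_right_distrib
        mult.assoc scale_left_commute add_ac mult.commute)
qed

lemma umult_left_add: "umult_left sc u (x + y) = umult_left sc u x + umult_left sc u y"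
  and umult_right_add: "umult_right sc (x + y) v = umult_right sc x v + umult_right sc y v"
  by (simp_all add: umult_left_def umult_right_def distrib_left distrib_right
      scale_right_distrib add_ac)

lemma umult_left_zero [simp]: "umult_left sc u 0 = 0"
  and umult_right_zero [simp]: "umult_right sc 0 v = 0"
  by (simp_all add: umult_left_def umult_right_def)

lemma umult_left_scale: "umult_left sc u (sc c x) = sc c (umult_left sc u x)"
  and umult_right_scale: "umult_right sc (sc c x) v = sc c (umult_right sc x v)"
  by (simp_all add: umult_left_def umult_right_def scale_right_distrib mult.commute
      flip: scale_mult_left scale_mult_right)

lemma elem_op_add: "elem_op sc ts (x + y) = elem_op sc ts x + elem_op sc ts y"
  by (induction ts) (simp_all add: umult_left_add umult_right_add add_ac)

lemma elem_op_scale: "elem_op sc ts (sc c x) = sc c (elem_op sc ts x)"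
  by (induction ts) (simp_all add: umult_left_scale umult_right_scale scale_right_distrib)

lemma elem_op_zero [simp]: "elem_op sc ts 0 = 0"
  by (induction ts) simp_all

lemma elem_op_scale_coeffs:
  "sc c (elem_op sc ts y) =
    elem_op sc (map (\<lambda>p. ((sc c (fst (fst p)), c * snd (fst p)), snd p)) ts) y"
  by (induction ts) (simp_all add: umult_left_def scale_right_distrib scale_mult_left)

lemma elem_op_comp:
  "elem_op sc ts (elem_op sc ts' y) =
    elem_op sc [(umult sc (fst p) (fst p'), umult sc (snd p') (snd p)). p \<leftarrow> ts, p' \<leftarrow> ts'] y"
proof (induction ts)
  case (Cons p ts)
  have "umult_left sc u (umult_right sc (elem_op sc ts' y) v) =
      elem_op sc (map (\<lambda>p'. (umult sc u (fst p'), umult sc (snd p') v)) ts') y" for u v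
    by (induction ts')
      (simp_all add: umult_left_right_commute umult_left_umult_left umult_right_umult_right
        umult_left_add umult_right_add)
  with Cons show ?case by (simp add: elem_op_append)
qed simp

lemma elementary_opI: "coeffs_in R ts \<Longrightarrow> f = elem_op sc ts \<Longrightarrow> elementary_op sc R f"
  unfolding elementary_op_def by blast

lemma elementary_op_id: "subalgebra sc R \<Longrightarrow> elementary_op sc R id"
  by (rule elementary_opI[of _ "[((0, 1), (0, 1))]"])
    (simp_all add: coeffs_in_def subalgebra_zero fun_eq_iff umult_left_def umult_right_def)

lemma elementary_op_lie_br: "subalgebra sc R \<Longrightarrow> x \<in> R \<Longrightarrow> elementary_op sc R (lie_br x)"
  by (rule elementary_opI[of _ "[((x, 0), (0, 1)), ((0, -1), (x, 0))]"])
    (simp_all add: coeffs_in_def subalgebra_zero fun_eq_iff umult_left_def umult_right_def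
      lie_br_def)

lemma elementary_op_lie_br_right:
  "subalgebra sc R \<Longrightarrow> x \<in> R \<Longrightarrow> elementary_op sc R (\<lambda>y. lie_br y x)"
  by (rule elementary_opI[of _ "[((0, 1), (x, 0)), ((- x, 0), (0, 1))]"])
    (simp_all add: coeffs_in_def subalgebra_zero subalgebra_uminus fun_eq_iff umult_left_def
      umult_right_def lie_br_def)

lemma elementary_op_add:
  assumes "elementary_op sc R f" and "elementary_op sc R g"
  shows "elementary_op sc R (\<lambda>y. f y + g y)"
proof -
  obtain ts ts' where "coeffs_in R ts" "f = elem_op sc ts" "coeffs_in R ts'" "g = elem_op sc ts'"
    using assms unfolding elementary_op_def by blast
  then show ?thesis
    by (intro elementary_opI[of _ "ts @ ts'"]) (simp_all add: elem_op_append fun_eq_iff)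
qed

lemma elementary_op_scale:
  assumes "subalgebra sc R" and "elementary_op sc R f"
  shows "elementary_op sc R (\<lambda>y. sc c (f y))"
proof -
  obtain ts where "coeffs_in R ts" "f = elem_op sc ts"
    using assms(2) unfolding elementary_op_def by blast
  with assms(1) show ?thesis
    by (intro elementary_opI[of _ "map (\<lambda>p. ((sc c (fst (fst p)), c * snd (fst p)), snd p)) ts"])
      (auto simp: coeffs_in_def elem_op_scale_coeffs subalgebra_scale)
qed

lemma elementary_op_comp:
  assumes "subalgebra sc R" and "elementary_op sc R f" and "elementary_op sc R g"
  shows "elementary_op sc R (f \<circ> g)"
proof -
  obtain ts ts' where "coeffs_in R ts" "f = elem_op sc ts" "coeffs_in R ts'" "g = elem_op sc ts'"
    using assms(2,3) unfolding elementary_op_def by blast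
  with assms(1) show ?thesis
    by (intro elementary_opI[of _
          "[(umult sc (fst p) (fst p'), umult sc (snd p') (snd p)). p \<leftarrow> ts, p' \<leftarrow> ts']"])
      (auto simp: coeffs_in_def elem_op_comp fun_eq_iff intro!: umult_in)
qed

lemma mult_alg_elementary_op:
  assumes "subalgebra sc R" and "L \<subseteq> R" and "\<mu> \<in> mult_alg sc L"
  shows "elementary_op sc R \<mu>"
  using assms(3)
proof (induction rule: mult_alg.induct)
  case mult_id
  show ?case using assms(1) by (rule elementary_op_id)
next
  case (mult_ad x)
  then show ?case using assms(1,2) elementary_op_lie_br by blast
next
  case (mult_comp f g)
  then show ?case using assms(1) elementary_op_comp by blast
next
  case (mult_add f g)
  then show ?case by (simp add: elementary_op_add)
next
  case (mult_scale f c)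
  then show ?case using assms(1) elementary_op_scale by blast
qed

lemma subspace_elementary_op_kernel: "elementary_op sc R f \<Longrightarrow> subspace {y. f y = 0}"
  unfolding elementary_op_def subspace_def by (auto simp: elem_op_add elem_op_scale)

lemma mult_alg_maps_into:
  assumes "subspace L" and "\<And>x y. x \<in> L \<Longrightarrow> y \<in> L \<Longrightarrow> lie_br x y \<in> L"
    and "\<mu> \<in> mult_alg sc L" and "y \<in> L"
  shows "\<mu> y \<in> L"
  using assms(3,4)
  by (induction arbitrary: y rule: mult_alg.induct)
    (auto intro: assms(2) subspace_add[OF assms(1)] subspace_scale[OF assms(1)])

lemma dense_mod_center_if_vanishing_extends:
  assumes "subalgebra sc R" and "L\<^sub>2 \<subseteq> R" and "subspace L\<^sub>2"
    and bracket_closed: "\<And>x y. x \<in> L\<^sub>2 \<Longrightarrow> y \<in> L\<^sub>2 \<Longrightarrow> lie_br x y \<in> L\<^sub>2"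
    and extends: "\<And>f. elementary_op sc R f \<Longrightarrow> \<forall>y\<in>L\<^sub>1. f y = 0 \<Longrightarrow> \<forall>y\<in>L\<^sub>2. f y = 0"
  shows "dense_mod_center sc L\<^sub>1 L\<^sub>2"
  unfolding dense_mod_center_def
proof (intro ballI impI)
  fix \<mu> y
  assume \<mu>: "\<mu> \<in> mult_alg sc L\<^sub>2" and central: "\<forall>y\<in>L\<^sub>1. \<mu> y \<in> lie_center L\<^sub>2" and y: "y \<in> L\<^sub>2"
  have "lie_br (\<mu> y) x = 0" if x: "x \<in> L\<^sub>2" for x
  proof -
    have "lie_br x \<circ> \<mu> \<in> mult_alg sc L\<^sub>2"
      using x \<mu> by (intro mult_alg.intros)
    then have "elementary_op sc R (lie_br x \<circ> \<mu>)"
      by (rule mult_alg_elementary_op[OF assms(1,2)])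
    moreover have "\<forall>z\<in>L\<^sub>1. (lie_br x \<circ> \<mu>) z = 0"
      using central x by (auto simp: lie_center_def lie_br_anticomm[of x])
    ultimately have "(lie_br x \<circ> \<mu>) y = 0"
      using extends y by blast
    then show ?thesis by (simp add: lie_br_anticomm[of x])
  qed
  moreover have "\<mu> y \<in> L\<^sub>2"
    using assms(3) bracket_closed \<mu> y by (rule mult_alg_maps_into)
  ultimately show "\<mu> y \<in> lie_center L\<^sub>2"
    by (simp add: lie_center_def)
qed


lemma umult_right_mult_left: "umult_right sc (m * y) v = m * umult_right sc y v"
  by (simp add: umult_right_def distrib_left mult.assoc scale_mult_right)

lemma elem_op_alg_in:
  assumes "subalgebra sc R" and "y \<in> R" and "\<forall>p\<in>set ts. fst p \<in> R \<and> fst (snd p) \<in> R"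
  shows "elem_op_alg sc ts y \<in> R"
  using assms(3)
  by (induction ts)
    (auto simp: umult_right_def assms(2) intro!: subalgebra_zero[OF assms(1)]
      subalgebra_add[OF assms(1)] subalgebra_mult[OF assms(1)] subalgebra_scale[OF assms(1)])

lemma elem_op_alg_drop_term:
  assumes "(a, v) \<in> set ts" and "a * m = m' * a"
  shows "elem_op_alg sc ts (m * y) - m' * elem_op_alg sc ts y
    = elem_op_alg sc (map (\<lambda>p. (fst p * m - m' * fst p, snd p)) (remove1 (a, v) ts)) y"
proof -
  let ?g = "\<lambda>p. (fst p * m - m' * fst p) * umult_right sc y (snd p)"
  have "elem_op_alg sc ts (m * y) - m' * elem_op_alg sc ts y = (\<Sum>p\<leftarrow>ts. ?g p)"
    by (induction ts) (simp_all add: umult_right_mult_left algebra_simps)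
  also have "\<dots> = ?g (a, v) + (\<Sum>p\<leftarrow>remove1 (a, v) ts. ?g p)"
    using assms(1) by (rule sum_list_map_remove1)
  also have "?g (a, v) = 0"
    using assms(2) by simp
  finally show ?thesis
    by (simp add: elem_op_alg_def o_def)
qed

lemma mult_elem_op:
  "d * elem_op sc ts y =
    elem_op_alg sc (map (\<lambda>p. (d * fst (fst p) + sc (snd (fst p)) d, snd p)) ts) y"
  by (induction ts)
    (simp_all add: umult_left_def distrib_left distrib_right mult.assoc
      flip: scale_mult_left scale_mult_right)

end

section \<open>Semiprime algebras\<close>

inductive_set ideal_gen :: "('k::comm_ring_1 \<Rightarrow> 'a::ring \<Rightarrow> 'a) \<Rightarrow> 'a set \<Rightarrow> 'a set \<Rightarrow> 'a set"
  for sc :: "'k::comm_ring_1 \<Rightarrow> 'a::ring \<Rightarrow> 'a" and A :: "'a set" and S :: "'a set" where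
  base: "s \<in> S \<Longrightarrow> s \<in> ideal_gen sc A S"
| zero: "0 \<in> ideal_gen sc A S"
| add: "u \<in> ideal_gen sc A S \<Longrightarrow> v \<in> ideal_gen sc A S \<Longrightarrow> u + v \<in> ideal_gen sc A S"
| uminus: "u \<in> ideal_gen sc A S \<Longrightarrow> - u \<in> ideal_gen sc A S"
| scale: "u \<in> ideal_gen sc A S \<Longrightarrow> sc c u \<in> ideal_gen sc A S"
| mult_left: "a \<in> A \<Longrightarrow> u \<in> ideal_gen sc A S \<Longrightarrow> a * u \<in> ideal_gen sc A S"
| mult_right: "a \<in> A \<Longrightarrow> u \<in> ideal_gen sc A S \<Longrightarrow> u * a \<in> ideal_gen sc A S"

text \<open>S A' T = 0, where A' is the unitization of A.\<close>

definition sandwich_zero :: "'a::ring set \<Rightarrow> 'a set \<Rightarrow> 'a set \<Rightarrow> bool" where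
  "sandwich_zero A S T \<longleftrightarrow> (\<forall>s\<in>S. \<forall>t\<in>T. s * t = 0 \<and> (\<forall>c\<in>A. s * c * t = 0))"

locale semiprime_algebra = assoc_algebra sc
  for sc :: "'k::comm_ring_1 \<Rightarrow> 'a::ring \<Rightarrow> 'a" +
  fixes A :: "'a set"
  assumes subalgebra_A: "subalgebra sc A"
    and semiprime_A: "semiprime sc A"
begin

lemma ideal_gen_subset:
  assumes "S \<subseteq> A" shows "u \<in> ideal_gen sc A S \<Longrightarrow> u \<in> A"
  by (induction rule: ideal_gen.induct)
    (use assms in \<open>auto intro: subalgebra_zero subalgebra_add subalgebra_uminus subalgebra_scale
      subalgebra_mult subalgebra_A\<close>)

lemma alg_ideal_ideal_gen: "S \<subseteq> A \<Longrightarrow> alg_ideal sc A (ideal_gen sc A S)"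
  unfolding alg_ideal_def submod_def using ideal_gen_subset by (auto intro: ideal_gen.intros)

lemma ideal_gen_sandwich_zero_left:
  assumes "sandwich_zero A S S" and "u \<in> ideal_gen sc A S"
  shows "sandwich_zero A {u} S"
  using assms(2)
proof (induction rule: ideal_gen.induct)
  case (base s)
  then show ?case using assms(1) by (simp add: sandwich_zero_def)
next
  case (add u v)
  then show ?case by (simp add: sandwich_zero_def distrib_right)
next
  case (scale u c)
  then show ?case by (simp add: sandwich_zero_def flip: scale_mult_left)
next
  case (mult_left a u)
  then show ?case by (simp add: sandwich_zero_def mult.assoc)
next
  case (mult_right a u)
  then show ?case
    using subalgebra_mult[OF subalgebra_A]
    by (simp add: sandwich_zero_def) (metis mult.assoc)
qed (simp_all add: sandwich_zero_def)

lemma ideal_gen_square_zero: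
  assumes "sandwich_zero A S S" and "v \<in> ideal_gen sc A S" and "u \<in> ideal_gen sc A S"
  shows "u * v = 0"
  using assms(2,3)
proof (induction arbitrary: u rule: ideal_gen.induct)
  case (base s)
  then show ?case
    using ideal_gen_sandwich_zero_left[OF assms(1)] by (simp add: sandwich_zero_def)
next
  case (add v w)
  then show ?case by (simp add: distrib_left)
next
  case (scale v c)
  then show ?case by (simp flip: scale_mult_right)
next
  case (mult_left a v)
  then show ?case by (metis ideal_gen.mult_right mult.assoc)
next
  case (mult_right a v)
  then show ?case by (metis mult_zero_left mult.assoc)
qed simp_all

lemma sandwich_zero_self_eq_0:
  assumes "S \<subseteq> A" and "sandwich_zero A S S" and "s \<in> S"
  shows "s = 0"
proof -
  have "ideal_gen sc A S = {0}"
    using semiprime_A alg_ideal_ideal_gen[OF assms(1)] ideal_gen_square_zero[OF assms(2)]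
    unfolding semiprime_def by blast
  then show ?thesis
    using ideal_gen.base[OF assms(3)] by blast
qed

lemma sandwich_eq_0:
  assumes x: "x \<in> A" and xAx: "\<forall>c\<in>A. x * c * x = 0"
  shows "x = 0"
proof -
  \<comment> \<open>The hypothesis says nothing about x x, so x x is killed first.\<close>
  have xx: "x * x \<in> A"
    using subalgebra_mult[OF subalgebra_A x x] .
  have "x * (x * x) * x = 0"
    using xAx xx by blast
  then have "sandwich_zero A {x * x} {x * x}"
    unfolding sandwich_zero_def
    using xAx by (simp add: mult.assoc) (metis mult.assoc mult_zero_left mult_zero_right)
  then have "x * x = 0"
    using sandwich_zero_self_eq_0[of "{x * x}"] xx by blast
  then have "sandwich_zero A {x} {x}"
    using xAx by (simp add: sandwich_zero_def)
  then show ?thesis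
    using sandwich_zero_self_eq_0[of "{x}"] x by blast
qed

lemma sandwich_eq_0_swap:
  assumes x: "x \<in> A" and y: "y \<in> A" and xAy: "\<forall>c\<in>A. x * c * y = 0" and c: "c \<in> A"
  shows "y * c * x = 0"
proof (rule sandwich_eq_0)
  show "y * c * x \<in> A"
    using x y c by (intro subalgebra_mult[OF subalgebra_A])
  show "\<forall>c'\<in>A. y * c * x * c' * (y * c * x) = 0"
    using xAy by (metis mult.assoc mult_zero_left mult_zero_right)
qed

end

section \<open>Dense left ideals and the maximal left quotient algebra\<close>

lemma
  assumes "dense_left_ideal sc A D"
  shows dense_left_ideal_subset: "D \<subseteq> A"
    and dense_left_ideal_mult: "a \<in> A \<Longrightarrow> x \<in> D \<Longrightarrow> a * x \<in> D"
    and dense_left_ideal_nonzero: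
      "p \<in> A \<Longrightarrow> r \<in> A \<Longrightarrow> p \<noteq> 0 \<Longrightarrow> \<exists>a\<in>A. a * p \<noteq> 0 \<and> a * r \<in> D"
  using assms by (auto simp: dense_left_ideal_def left_ideal_def)

locale max_left_quotient = semiprime_algebra sc A
  for sc :: "'k::comm_ring_1 \<Rightarrow> 'a::ring \<Rightarrow> 'a" and A :: "'a set" +
  fixes Qm :: "'a set"
  assumes is_Qlmax: "is_Qlmax sc A Qm"
begin

lemma subalgebra_Qm: "subalgebra sc Qm" and A_subset_Qm: "A \<subseteq> Qm"
  using is_Qlmax by (simp_all add: is_Qlmax_def)

lemma Qm_denominator: "q \<in> Qm \<Longrightarrow> \<exists>D. dense_left_ideal sc A D \<and> (\<forall>x\<in>D. x * q \<in> A)"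
  using is_Qlmax by (simp add: is_Qlmax_def)

lemma Qm_eq_0_if_dense_annihilates:
  "q \<in> Qm \<Longrightarrow> dense_left_ideal sc A D \<Longrightarrow> \<forall>x\<in>D. x * q = 0 \<Longrightarrow> q = 0"
  using is_Qlmax unfolding is_Qlmax_def by blast

lemma dense_left_ideal_A: "dense_left_ideal sc A A"
  unfolding dense_left_ideal_def
proof (intro conjI ballI impI)
  show "left_ideal sc A A"
    using subalgebra_A by (simp add: left_ideal_def subalgebra_def)
  fix p r assume p: "p \<in> A" and r: "r \<in> A" and "p \<noteq> 0"
  then have "\<not> (\<forall>c\<in>A. p * c * p = 0)"
    using sandwich_eq_0 by blast
  then show "\<exists>a\<in>A. a * p \<noteq> 0 \<and> a * r \<in> A"
    using p r subalgebra_mult[OF subalgebra_A] by (metis mult.assoc mult_zero_right)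
qed

lemma dense_left_ideal_Int:
  assumes D\<^sub>1: "dense_left_ideal sc A D\<^sub>1" and D\<^sub>2: "dense_left_ideal sc A D\<^sub>2"
  shows "dense_left_ideal sc A (D\<^sub>1 \<inter> D\<^sub>2)"
  unfolding dense_left_ideal_def
proof (intro conjI ballI impI)
  show "left_ideal sc A (D\<^sub>1 \<inter> D\<^sub>2)"
    using assms by (auto simp: dense_left_ideal_def left_ideal_def submod_def)
  fix p r assume p: "p \<in> A" and r: "r \<in> A" and "p \<noteq> 0"
  then obtain a\<^sub>1 where a\<^sub>1: "a\<^sub>1 \<in> A" "a\<^sub>1 * p \<noteq> 0" "a\<^sub>1 * r \<in> D\<^sub>1"
    using dense_left_ideal_nonzero[OF D\<^sub>1] by blast
  moreover obtain a\<^sub>2 where a\<^sub>2: "a\<^sub>2 \<in> A" "a\<^sub>2 * (a\<^sub>1 * p) \<noteq> 0" "a\<^sub>2 * (a\<^sub>1 * r) \<in> D\<^sub>2"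
    using dense_left_ideal_nonzero[OF D\<^sub>2] a\<^sub>1 p r subalgebra_mult[OF subalgebra_A] by metis
  ultimately show "\<exists>a\<in>A. a * p \<noteq> 0 \<and> a * r \<in> D\<^sub>1 \<inter> D\<^sub>2"
    using dense_left_ideal_mult[OF D\<^sub>1] subalgebra_mult[OF subalgebra_A]
    by (intro bexI[of _ "a\<^sub>2 * a\<^sub>1"]) (simp_all add: mult.assoc)
qed

lemma dense_left_ideal_preimage:
  assumes D: "dense_left_ideal sc A D" and u: "u \<in> Qm"
  shows "dense_left_ideal sc A {t \<in> A. t * u \<in> D}"
  unfolding dense_left_ideal_def
proof (intro conjI ballI impI)
  show "left_ideal sc A {t \<in> A. t * u \<in> D}"
    using D subalgebra_A
    by (auto simp: dense_left_ideal_def left_ideal_def submod_def subalgebra_def distrib_right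
        mult.assoc simp flip: scale_mult_left)
  fix p r assume p: "p \<in> A" and r: "r \<in> A" and "p \<noteq> 0"
  obtain E where E: "dense_left_ideal sc A E" "\<forall>x\<in>E. x * u \<in> A"
    using Qm_denominator[OF u] by blast
  obtain a\<^sub>1 where a\<^sub>1: "a\<^sub>1 \<in> A" "a\<^sub>1 * p \<noteq> 0" "a\<^sub>1 * r \<in> E"
    using dense_left_ideal_nonzero[OF E(1) p r \<open>p \<noteq> 0\<close>] by blast
  moreover obtain a\<^sub>2 where a\<^sub>2: "a\<^sub>2 \<in> A" "a\<^sub>2 * (a\<^sub>1 * p) \<noteq> 0" "a\<^sub>2 * (a\<^sub>1 * r * u) \<in> D"
    using dense_left_ideal_nonzero[OF D] a\<^sub>1 p E(2) subalgebra_mult[OF subalgebra_A] by metis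
  ultimately show "\<exists>a\<in>A. a * p \<noteq> 0 \<and> a * r \<in> {t \<in> A. t * u \<in> D}"
    using r subalgebra_mult[OF subalgebra_A]
    by (intro bexI[of _ "a\<^sub>2 * a\<^sub>1"]) (simp_all add: mult.assoc)
qed

lemma common_denominator:
  assumes "finite F" and "F \<subseteq> Qm"
  shows "\<exists>D. dense_left_ideal sc A D \<and> (\<forall>x\<in>F. \<forall>d\<in>D. d * x \<in> A)"
  using assms
proof (induction rule: finite_induct)
  case empty
  show ?case using dense_left_ideal_A by blast
next
  case (insert x F)
  then obtain D D' where "dense_left_ideal sc A D" "\<forall>y\<in>F. \<forall>d\<in>D. d * y \<in> A"
    and "dense_left_ideal sc A D'" "\<forall>d\<in>D'. d * x \<in> A"
    using Qm_denominator by (metis insert_subset)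
  then show ?case
    using dense_left_ideal_Int by (intro exI[of _ "D \<inter> D'"]) auto
qed

lemma Qm_sandwich_eq_0:
  assumes z: "z \<in> Qm" and zAz: "\<forall>c\<in>A. z * c * z = 0"
  shows "z = 0"
proof -
  obtain D where D: "dense_left_ideal sc A D" "\<forall>x\<in>D. x * z \<in> A"
    using Qm_denominator[OF z] by blast
  have "d * z = 0" if d: "d \<in> D" for d
  proof (rule sandwich_eq_0)
    show "d * z \<in> A" using D(2) d by blast
    have "c * d \<in> A" if "c \<in> A" for c
      using that d dense_left_ideal_subset[OF D(1)] subalgebra_mult[OF subalgebra_A] by blast
    then show "\<forall>c\<in>A. d * z * c * (d * z) = 0"
      using zAz by (metis mult.assoc mult_zero_right)
  qed
  then show ?thesis
    using Qm_eq_0_if_dense_annihilates[OF z D(1)] by blast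
qed

lemma dense_sandwich_eq_0_swap:
  assumes a: "a \<in> A" and w: "w \<in> Qm" and E: "dense_left_ideal sc A E"
    and aEw: "\<forall>t\<in>E. a * t * w = 0" and c: "c \<in> A"
  shows "w * c * a = 0"
proof -
  obtain D where D: "dense_left_ideal sc A D" "\<forall>x\<in>D. x * w \<in> A"
    using Qm_denominator[OF w] by blast
  have "d * (w * c * a) = 0" if d: "d \<in> E \<inter> D" for d
  proof -
    have "a * c' * (d * w) = 0" if "c' \<in> A" for c'
    proof -
      have "a * (c' * d) * w = 0"
        using aEw d dense_left_ideal_mult[OF E that] by blast
      then show ?thesis by (simp add: mult.assoc)
    qed
    then have "d * w * c * a = 0"
      using sandwich_eq_0_swap[OF a _ _ c] D(2) d by blast
    then show ?thesis by (simp add: mult.assoc)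
  qed
  moreover have "w * c * a \<in> Qm"
    using w c a A_subset_Qm subalgebra_mult[OF subalgebra_Qm] by blast
  ultimately show ?thesis
    using Qm_eq_0_if_dense_annihilates dense_left_ideal_Int[OF E D(1)] by blast
qed

lemma elem_op_alg_vanishing_extends:
  assumes "\<forall>p\<in>set ts. fst p \<in> A \<and> fst (snd p) \<in> Qm"
    and "\<forall>y\<in>A. elem_op_alg sc ts y = 0" and "q \<in> Qm"
  shows "elem_op_alg sc ts q = 0"
  using assms
proof (induction "length ts" arbitrary: ts q rule: less_induct)
  case less
  note coeffs = less.prems(1) and vanish = less.prems(2) and q = less.prems(3)
  define w where "w = elem_op_alg sc ts q"
  have w: "w \<in> Qm"
    unfolding w_def using subalgebra_Qm q coeffs A_subset_Qm by (blast intro: elem_op_alg_in)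
  obtain D where D: "dense_left_ideal sc A D" "\<forall>x\<in>D. x * q \<in> A"
    using Qm_denominator[OF q] by blast
  have aEw: "a * t * w = 0" if av: "(a, v) \<in> set ts" and t: "t \<in> {t \<in> A. t * a \<in> D}" for a v t
  proof -
    \<comment> \<open>Multiplying the argument by t a and the value by a t cancels the term of (a, v).\<close>
    let ?ts' = "map (\<lambda>p. (fst p * (t * a) - a * t * fst p, snd p)) (remove1 (a, v) ts)"
    have drop:
      "elem_op_alg sc ts (t * a * y) - a * t * elem_op_alg sc ts y = elem_op_alg sc ?ts' y" for y
      using elem_op_alg_drop_term[OF av, where m = "t * a" and m' = "a * t"]
      by (simp add: mult.assoc)
    have "length ?ts' < length ts"
      using av length_pos_if_in_set[OF av] by (simp add: length_remove1)
    moreover have "\<forall>p\<in>set ?ts'. fst p \<in> A \<and> fst (snd p) \<in> Qm"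
      using coeffs av t notin_set_remove1
      by (auto intro!: subalgebra_diff[OF subalgebra_A] subalgebra_mult[OF subalgebra_A])
    moreover have "\<forall>y\<in>A. elem_op_alg sc ?ts' y = 0"
    proof
      fix y assume y: "y \<in> A"
      then have "t * a * y \<in> A"
        using t av coeffs by (auto intro!: subalgebra_mult[OF subalgebra_A])
      then show "elem_op_alg sc ?ts' y = 0"
        using drop[of y] vanish y by simp
    qed
    ultimately have "elem_op_alg sc ?ts' q = 0"
      using less.hyps q by blast
    moreover have "elem_op_alg sc ts (t * a * q) = 0"
      using vanish D(2) t by simp
    ultimately show ?thesis
      using drop[of q] by (simp add: w_def)
  qed
  have wAa: "w * c * a = 0" if av: "(a, v) \<in> set ts" and c: "c \<in> A" for a v c
  proof (rule dense_sandwich_eq_0_swap[OF _ w _ _ c])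
    show a: "a \<in> A"
      using coeffs av by auto
    show "dense_left_ideal sc A {t \<in> A. t * a \<in> D}"
      using dense_left_ideal_preimage[OF D(1)] a A_subset_Qm by blast
    show "\<forall>t\<in>{t \<in> A. t * a \<in> D}. a * t * w = 0"
      using aEw av by blast
  qed
  have "w * c * w = 0" if c: "c \<in> A" for c
  proof -
    have "\<forall>p\<in>set ts. w * c * fst p = 0"
      using wAa[OF _ c] by (metis prod.collapse)
    then show ?thesis
      unfolding w_def by (rule elem_op_alg_left_zero)
  qed
  then show ?case
    using Qm_sandwich_eq_0[OF w] by (simp add: w_def)
qed

lemma elementary_op_vanishing_extends:
  assumes f: "elementary_op sc Qm f" and vanish: "\<forall>y\<in>A. f y = 0" and q: "q \<in> Qm"
  shows "f q = 0"
proof -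
  obtain ts where ts: "coeffs_in Qm ts" "f = elem_op sc ts"
    using f unfolding elementary_op_def by blast
  obtain D where D: "dense_left_ideal sc A D" "\<forall>x\<in>fst ` fst ` set ts. \<forall>d\<in>D. d * x \<in> A"
    using common_denominator[of "fst ` fst ` set ts"] ts(1) by (auto simp: coeffs_in_def)
  have "d * f q = 0" if d: "d \<in> D" for d
  proof -
    let ?ts' = "map (\<lambda>p. (d * fst (fst p) + sc (snd (fst p)) d, snd p)) ts"
    have "\<forall>p\<in>set ?ts'. fst p \<in> A \<and> fst (snd p) \<in> Qm"
      using D(2) d ts(1) dense_left_ideal_subset[OF D(1)]
      by (auto simp: coeffs_in_def
          intro!: subalgebra_add[OF subalgebra_A] subalgebra_scale[OF subalgebra_A])
    moreover have "\<forall>y\<in>A. elem_op_alg sc ?ts' y = 0"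
      using vanish ts(2) by (simp flip: mult_elem_op)
    ultimately show ?thesis
      using elem_op_alg_vanishing_extends q ts(2) by (simp add: mult_elem_op)
  qed
  moreover have "f q \<in> Qm"
    using elem_op_in[OF subalgebra_Qm ts(1) q] ts(2) by simp
  ultimately show ?thesis
    using Qm_eq_0_if_dense_annihilates D(1) by blast
qed

section \<open>Density of the Lie extensions\<close>

lemma lie_center_eq_Int:
  assumes "A \<subseteq> Q" and "Q \<subseteq> Qm"
  shows "lie_center A = lie_center Q \<inter> A"
proof
  show "lie_center Q \<inter> A \<subseteq> lie_center A"
    using assms(1) by (auto simp: lie_center_def)
  show "lie_center A \<subseteq> lie_center Q \<inter> A"
  proof
    fix z assume z: "z \<in> lie_center A"
    then have "elementary_op sc Qm (lie_br z)"
      using A_subset_Qm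
      by (auto simp: lie_center_def intro: elementary_op_lie_br[OF subalgebra_Qm])
    then have "\<forall>x\<in>Qm. lie_br z x = 0"
      using z by (auto simp: lie_center_def intro: elementary_op_vanishing_extends)
    then show "z \<in> lie_center Q \<inter> A"
      using z assms by (auto simp: lie_center_def)
  qed
qed

lemma dense_mod_center_subalgebra:
  assumes "subalgebra sc Q" and "Q \<subseteq> Qm"
  shows "dense_mod_center sc A Q"
  using subalgebra_Qm assms(2) subspace_if_subalgebra[OF assms(1)]
proof (rule dense_mod_center_if_vanishing_extends)
  show "lie_br x y \<in> Q" if "x \<in> Q" and "y \<in> Q" for x y
    using assms(1) that by (rule subalgebra_lie_br)
  show "\<forall>y\<in>Q. f y = 0" if "elementary_op sc Qm f" and "\<forall>y\<in>A. f y = 0" for f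
    using that assms(2) elementary_op_vanishing_extends by blast
qed

lemma elementary_op_vanishing_extends_commutators:
  assumes f: "elementary_op sc Qm f" and vanish: "\<forall>a\<in>A. \<forall>b\<in>A. f (lie_br a b) = 0"
    and x: "x \<in> Qm" and y: "y \<in> Qm"
  shows "f (lie_br x y) = 0"
proof -
  have right_A: "f (lie_br q b) = 0" if b: "b \<in> A" and q: "q \<in> Qm" for b q
  proof -
    have "elementary_op sc Qm (f \<circ> (\<lambda>y. lie_br y b))"
      using b A_subset_Qm
      by (blast intro: elementary_op_comp[OF subalgebra_Qm f]
          elementary_op_lie_br_right[OF subalgebra_Qm])
    moreover have "\<forall>a\<in>A. (f \<circ> (\<lambda>y. lie_br y b)) a = 0"
      using vanish b by simp
    ultimately have "(f \<circ> (\<lambda>y. lie_br y b)) q = 0"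
      by (rule elementary_op_vanishing_extends[OF _ _ q])
    then show ?thesis by simp
  qed
  have "elementary_op sc Qm (f \<circ> lie_br x)"
    using x
    by (blast intro: elementary_op_comp[OF subalgebra_Qm f] elementary_op_lie_br[OF subalgebra_Qm])
  moreover have "\<forall>a\<in>A. (f \<circ> lie_br x) a = 0"
    using right_A x by simp
  ultimately have "(f \<circ> lie_br x) y = 0"
    by (rule elementary_op_vanishing_extends[OF _ _ y])
  then show ?thesis by simp
qed

lemma dense_mod_center_comm_span:
  assumes Q: "subalgebra sc Q" and "Q \<subseteq> Qm"
  shows "dense_mod_center sc (comm_span sc A) (comm_span sc Q)"
proof (rule dense_mod_center_if_vanishing_extends[OF subalgebra_Qm])
  have span_Q: "comm_span sc Q \<subseteq> Q"
    unfolding comm_span_def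
    using subspace_if_subalgebra[OF Q] subalgebra_lie_br[OF Q] by (intro span_minimal) auto
  then show "comm_span sc Q \<subseteq> Qm"
    using assms(2) by blast
  show "lie_br x y \<in> comm_span sc Q" if "x \<in> comm_span sc Q" and "y \<in> comm_span sc Q" for x y
    using span_Q that unfolding comm_span_def by (blast intro: span_base)
  show "subspace (comm_span sc Q)"
    by (simp add: comm_span_def)
  show "\<forall>y\<in>comm_span sc Q. f y = 0"
    if f: "elementary_op sc Qm f" and vanish: "\<forall>y\<in>comm_span sc A. f y = 0" for f
  proof -
    have "\<forall>a\<in>A. \<forall>b\<in>A. f (lie_br a b) = 0"
      using vanish unfolding comm_span_def by (blast intro: span_base)
    then have "{lie_br x y | x y. x \<in> Q \<and> y \<in> Q} \<subseteq> {y. f y = 0}"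
      using elementary_op_vanishing_extends_commutators[OF f] assms(2) by blast
    then show ?thesis
      unfolding comm_span_def using subspace_elementary_op_kernel[OF f] span_minimal by blast
  qed
qed

end

theorem mainTheorem14:
  fixes sc :: "'k::comm_ring_1 \<Rightarrow> 'a::ring \<Rightarrow> 'a"
    and A Qm Q :: "'a set"
  assumes "phi_algebra sc"
    and "subalgebra sc A"
    and "semiprime sc A"
    and "is_Qlmax sc A Qm"
    and "subalgebra sc Q" and "A \<subseteq> Q" and "Q \<subseteq> Qm"
  shows "lie_center A = lie_center Q \<inter> A
    \<and> dense_mod_center sc A Q
    \<and> dense_mod_center sc (comm_span sc A) (comm_span sc Q)"
proof -
  interpret max_left_quotient sc A Qm
    using assms(1-4) by unfold_locales
  show ?thesis
    using lie_center_eq_Int dense_mod_center_subalgebra dense_mod_center_comm_span assms(5-7)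
    by blast
qed

end
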